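(* Let $\mathbf{E}$ be the all-ones matrix, and for data $\mathbf{D}\in\mathbb{R}^{n\times n}$, positive integers $k_0,k_1$, hyperparameters $\lambda,\mu>0$, and bounds $\beta,\gamma>0$ consider the relaxation $$\begin{aligned}\text{(A)}\quad \min_{\mathbf{X}, \mathbf{Y}, \mathbf{V}, \mathbf{W}_1, \mathbf{W}_2 \in \mathbb{R}^{n \times n}} \ & \Vert\mathbf{D} - \mathbf{X} - \mathbf{Y}\Vert_F^2 + \lambda \Vert \mathbf{X} \Vert_F^2 + \mu \Vert \mathbf{Y} \Vert_F^2 \\ \text{s.t.}\ & -\mathbf{V} \leq \mathbf{Y} \leq \mathbf{V},\ \tfrac{1}{\gamma} \langle \mathbf{E}, \mathbf{V}\rangle \leq k_1,\ \tfrac{1}{2\beta} \mathrm{tr}(\mathbf{W}_1)+\tfrac{1}{2\beta}\mathrm{tr}(\mathbf{W}_2) \leq k_0,\ \begin{pmatrix}\mathbf{W}_1 & \mathbf{X}\\ \mathbf{X}^T & \mathbf{W}_2\end{pmatrix} \succeq 0,\end{aligned}$$ and the relaxation $$\begin{aligned}\text{(B)}\quad \min_{\mathbf{X}, \mathbf{Y}, \mathbf{Z}, \mathbf{P}_c, \mathbf{P}_r, \mathbf{\Theta}, \boldsymbol{\alpha} \in \mathbb{R}^{n \times n}} \ & \Vert\mathbf{D} - \mathbf{X} - \mathbf{Y}\Vert_F^2 + \lambda\, \mathrm{tr}(\mathbf{\Theta}) + \mu \langle \mathbf{E}, \boldsymbol{\alpha}\rangle \\ \text{s.t.}\ & \mathbf{Y}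 \circ \mathbf{Y} \leq \boldsymbol{\alpha} \circ \mathbf{Z},\ \langle \mathbf{E}, \mathbf{Z}\rangle \leq k_1,\ \mathbf{0} \leq \mathbf{Z} \leq \mathbf{E},\ -\gamma \mathbf{Z} \leq\mathbf{Y} \leq \gamma \mathbf{Z},\\ & \mathbf{P}_c \succeq 0,\ \mathbb{I} - \mathbf{P}_c \succeq 0,\ \mathrm{tr}(\mathbf{P}_c) \leq k_0,\ \mathbf{P}_r \succeq 0,\ \mathbb{I} - \mathbf{P}_r \succeq 0,\ \mathrm{tr}(\mathbf{P}_r) \leq k_0,\\ & \begin{pmatrix}\mathbf{\Theta} & \mathbf{X}\\ \mathbf{X}^T & \mathbf{P}_c\end{pmatrix} \succeq 0,\ \begin{pmatrix}\beta\mathbf{P}_r & \mathbf{X}\\ \mathbf{X}^T & \beta\mathbf{P}_c\end{pmatrix} \succeq 0.\end{aligned}$$ There exist input data $\mathbf{D}, k_0, k_1$ and hyperparameters $\lambda, \mu$ (and bounds $\beta,\gamma$) such that the optimal value of (B) is strictly greater than the optimal value of (A).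
   Context: Both (A) and (B) are convex relaxations of the sparse plus low-rank problem $\min_{\mathbf{X},\mathbf{Y}} \Vert\mathbf{D}-\mathbf{X}-\mathbf{Y}\Vert_F^2+\lambda\Vert\mathbf{X}\Vert_F^2+\mu\Vert\mathbf{Y}\Vert_F^2$ s.t. $\mathrm{Rank}(\mathbf{X})\le k_0$, $\Vert\mathbf{Y}\Vert_0\le k_1$, under the assumptions that the spectral norm of $\mathbf{X}$ is at most $\beta$ and the entrywise $\ell_\infty$ norm of $\mathbf{Y}$ is at most $\gamma$. (A) is the relaxation of Lee and Zou; (B) is the paper's strengthened perspective relaxation. $\circ$ denotes the Hadamard product, matrix inequalities are entrywise except $\succeq$ (positive semidefiniteness), and $\mathbb{I}$ is the identity. It is separately known that the optimal value of (B) is always at least that of (A). *)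

theory Defs
  imports "Jordan_Normal_Form.Matrix"
begin

definition mtrace :: "real mat \<Rightarrow> real" where
  "mtrace A = (\<Sum>i<dim_row A. A $$ (i,i))"

text \<open>Frobenius inner product with the all-ones matrix E: sum of all entries.\<close>
definition sum_entries :: "real mat \<Rightarrow> real" where
  "sum_entries A = (\<Sum>i<dim_row A. \<Sum>j<dim_col A. A $$ (i,j))"

definition frob_sq :: "real mat \<Rightarrow> real" where
  "frob_sq A = (\<Sum>i<dim_row A. \<Sum>j<dim_col A. (A $$ (i,j))^2)"

definition mat_le :: "nat \<Rightarrow> real mat \<Rightarrow> real mat \<Rightarrow> bool" where
  "mat_le n A B = (\<forall>i<n. \<forall>j<n. A $$ (i,j) \<le> B $$ (i,j))"

definition psd :: "nat \<Rightarrow> real mat \<Rightarrow> bool" where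
  "psd m A = (A \<in> carrier_mat m m \<and> A\<^sup>T = A \<and>
     (\<forall>v \<in> carrier_vec m. v \<bullet> (A *\<^sub>v v) \<ge> 0))"

definition all_ones :: "nat \<Rightarrow> real mat" where
  "all_ones n = mat n n (\<lambda>_. 1)"

definition feasA_vals :: "nat \<Rightarrow> real mat \<Rightarrow> nat \<Rightarrow> nat \<Rightarrow> real \<Rightarrow> real \<Rightarrow> real \<Rightarrow> real \<Rightarrow> real set" where
  "feasA_vals n D k0 k1 lam mu beta gamma =
    {frob_sq (D - X - Y) + lam * frob_sq X + mu * frob_sq Y | X Y V W1 W2.
       X \<in> carrier_mat n n \<and> Y \<in> carrier_mat n n \<and> V \<in> carrier_mat n n \<and>
       W1 \<in> carrier_mat n n \<and> W2 \<in> carrier_mat n n \<and>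
       mat_le n (- V) Y \<and> mat_le n Y V \<and>
       (1 / gamma) * sum_entries V \<le> real k1 \<and>
       (1 / (2 * beta)) * mtrace W1 + (1 / (2 * beta)) * mtrace W2 \<le> real k0 \<and>
       psd (2 * n) (four_block_mat W1 X (X\<^sup>T) W2)}"

definition optA :: "nat \<Rightarrow> real mat \<Rightarrow> nat \<Rightarrow> nat \<Rightarrow> real \<Rightarrow> real \<Rightarrow> real \<Rightarrow> real \<Rightarrow> real" where
  "optA n D k0 k1 lam mu beta gamma = Inf (feasA_vals n D k0 k1 lam mu beta gamma)"

text \<open>Strengthened perspective relaxation (B). The perspective constraint
  Y o Y <= alpha o Z is read as the rotated second-order cone constraint,
  which includes alpha >= 0.\<close>
definition feasB_vals :: "nat \<Rightarrow> real mat \<Rightarrow> nat \<Rightarrow> nat \<Rightarrow> real \<Rightarrow> real \<Rightarrow> real \<Rightarrow> real \<Rightarrow> real set" where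
  "feasB_vals n D k0 k1 lam mu beta gamma =
    {frob_sq (D - X - Y) + lam * mtrace Theta + mu * sum_entries alpha | X Y Z Pc Pr Theta alpha.
       X \<in> carrier_mat n n \<and> Y \<in> carrier_mat n n \<and> Z \<in> carrier_mat n n \<and>
       Pc \<in> carrier_mat n n \<and> Pr \<in> carrier_mat n n \<and> Theta \<in> carrier_mat n n \<and>
       alpha \<in> carrier_mat n n \<and>
       (\<forall>i<n. \<forall>j<n. (Y $$ (i,j))^2 \<le> alpha $$ (i,j) * Z $$ (i,j) \<and> 0 \<le> alpha $$ (i,j)) \<and>
       sum_entries Z \<le> real k1 \<and>
       mat_le n (0\<^sub>m n n) Z \<and> mat_le n Z (all_ones n) \<and>
       mat_le n (- (gamma \<cdot>\<^sub>m Z)) Y \<and> mat_le n Y (gamma \<cdot>\<^sub>m Z) \<and>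
       psd n Pc \<and> psd n (1\<^sub>m n - Pc) \<and> mtrace Pc \<le> real k0 \<and>
       psd n Pr \<and> psd n (1\<^sub>m n - Pr) \<and> mtrace Pr \<le> real k0 \<and>
       psd (2 * n) (four_block_mat Theta X (X\<^sup>T) Pc) \<and>
       psd (2 * n) (four_block_mat (beta \<cdot>\<^sub>m Pr) X (X\<^sup>T) (beta \<cdot>\<^sub>m Pc))}"

definition optB :: "nat \<Rightarrow> real mat \<Rightarrow> nat \<Rightarrow> nat \<Rightarrow> real \<Rightarrow> real \<Rightarrow> real \<Rightarrow> real \<Rightarrow> real" where
  "optB n D k0 k1 lam mu beta gamma = Inf (feasB_vals n D k0 k1 lam mu beta gamma)"

end

theory Submission imports Defs begin

(* A counterexample with n = 1, D = 10, k0 = 2 and lambda = mu = beta = gamma = k1 = 1.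
   Relaxation (A) never imposes the spectral bound beta on X by itself: its trace budget
   2 beta k0 = 4 admits W1 = W2 = X = 2, so with Y = V = 1 it attains 7^2 + 2^2 + 1^2 = 54.
   In (B) the block [beta Pr, X; X^T, beta Pc] with Pr, Pc <= I forces X <= beta = 1, and
   Y <= gamma Z <= 1, so the residual is at least 8 and every feasible value is at least 64. *)

lemma psd_diag_nonneg:
  assumes "psd m A" "i < m"
  shows "0 \<le> A $$ (i, i)"
proof -
  have A: "A \<in> carrier_mat m m" using assms(1) unfolding psd_def by blast
  have "0 \<le> unit_vec m i \<bullet> (A *\<^sub>v unit_vec m i)"
    using assms(1) unfolding psd_def by simp
  also have "\<dots> = A $$ (i, i)"
    using A assms(2) by simp
  finally show ?thesis .
qed

lemma psd_off_diag_le: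
  assumes "psd m A" "i < m" "j < m"
  shows "2 * A $$ (i, j) \<le> A $$ (i, i) + A $$ (j, j)"
proof -
  have A: "A \<in> carrier_mat m m" and sym: "A\<^sup>T = A" using assms(1) unfolding psd_def by auto
  let ?w = "unit_vec m i - unit_vec m j :: real vec"
  have "0 \<le> ?w \<bullet> (A *\<^sub>v ?w)"
    using assms(1) unfolding psd_def by simp
  also have "\<dots> = A $$ (i, i) - A $$ (i, j) - A $$ (j, i) + A $$ (j, j)"
    using A assms(2,3)
    by (simp add: mult_minus_distrib_mat_vec) (subst minus_scalar_prod_distrib[of _ m], auto)
  also have "A $$ (j, i) = A $$ (i, j)"
    using A assms(2,3) sym by (metis carrier_matD index_transpose_mat(1))
  finally show ?thesis by simp
qed

lemma psd_const_mat:
  assumes "0 \<le> c"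
  shows "psd m (mat m m (\<lambda>_. c))"
  unfolding psd_def
proof (intro conjI ballI)
  fix v :: "real vec" assume v: "v \<in> carrier_vec m"
  have "v \<bullet> (mat m m (\<lambda>_. c) *\<^sub>v v) = c * (\<Sum>i<m. v $ i)\<^sup>2"
    using v by (simp add: scalar_prod_def row_def power2_eq_square sum_distrib_left sum_distrib_right
        lessThan_atLeast0 algebra_simps)
  then show "0 \<le> v \<bullet> (mat m m (\<lambda>_. c) *\<^sub>v v)"
    using assms by simp
qed auto

lemma psd_zero_mat: "psd m (0\<^sub>m m m)"
  using psd_const_mat[of 0 m] by (simp add: zero_mat_def)

lemma psd_one_mat: "psd m (1\<^sub>m m)"
  unfolding psd_def by (auto simp: scalar_prod_def sum_nonneg)

lemma psd_block_diag_le: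
  assumes Pr: "Pr \<in> carrier_mat n n" and Pc: "Pc \<in> carrier_mat n n" and X: "X \<in> carrier_mat n n"
    and "0 \<le> \<beta>" "psd n (1\<^sub>m n - Pr)" "psd n (1\<^sub>m n - Pc)"
    and block: "psd (2 * n) (four_block_mat (\<beta> \<cdot>\<^sub>m Pr) X X\<^sup>T (\<beta> \<cdot>\<^sub>m Pc))"
    and "i < n"
  shows "X $$ (i, i) \<le> \<beta>"
proof -
  have "2 * X $$ (i, i) \<le> \<beta> * Pr $$ (i, i) + \<beta> * Pc $$ (i, i)"
    using psd_off_diag_le[OF block, of i "n + i"] Pr Pc X \<open>i < n\<close> by simp
  moreover have "Pr $$ (i, i) \<le> 1" "Pc $$ (i, i) \<le> 1"
    using psd_diag_nonneg[OF assms(5) \<open>i < n\<close>] psd_diag_nonneg[OF assms(6) \<open>i < n\<close>] Pr Pc \<open>i < n\<close>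
    by simp_all
  then have "\<beta> * Pr $$ (i, i) \<le> \<beta>" "\<beta> * Pc $$ (i, i) \<le> \<beta>"
    using mult_left_mono[of _ 1 \<beta>] \<open>0 \<le> \<beta>\<close> by simp_all
  ultimately show ?thesis by linarith
qed

lemma frob_sq_nonneg: "0 \<le> frob_sq A"
  unfolding frob_sq_def by (intro sum_nonneg) simp

lemma bdd_below_feasA_vals:
  assumes "0 \<le> lam" "0 \<le> mu"
  shows "bdd_below (feasA_vals n D k0 k1 lam mu beta gamma)"
  unfolding feasA_vals_def
  by (rule bdd_belowI[of _ 0]) (auto intro!: add_nonneg_nonneg mult_nonneg_nonneg frob_sq_nonneg assms)

lemma feasB_vals_nonempty: "feasB_vals n D k0 k1 lam mu beta gamma \<noteq> {}"
proof -
  let ?O = "0\<^sub>m n n :: real mat"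
  have one_minus_zero: "1\<^sub>m n - ?O = 1\<^sub>m n" by (rule eq_matI) auto
  have "frob_sq (D - ?O - ?O) + lam * mtrace ?O + mu * sum_entries ?O \<in> feasB_vals n D k0 k1 lam mu beta gamma"
    unfolding feasB_vals_def mem_Collect_eq
    using one_minus_zero psd_zero_mat[of "2 * n"]
    by (intro exI[of _ ?O] conjI refl)
      (auto simp: mat_le_def all_ones_def mtrace_def sum_entries_def psd_one_mat psd_zero_mat mult_2)
  then show ?thesis by blast
qed

definition scalar_mat :: "real \<Rightarrow> real mat" where
  "scalar_mat c = mat 1 1 (\<lambda>_. c)"

lemma
  assumes "A \<in> carrier_mat 1 1"
  shows mtrace_1x1: "mtrace A = A $$ (0, 0)"
    and sum_entries_1x1: "sum_entries A = A $$ (0, 0)"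
  using assms by (simp_all add: mtrace_def sum_entries_def)

lemma example_feasA_value: "54 \<in> feasA_vals 1 (scalar_mat 10) 2 1 1 1 1 1"
proof -
  have "four_block_mat (scalar_mat 2) (scalar_mat 2) (scalar_mat 2)\<^sup>T (scalar_mat 2) = mat 2 2 (\<lambda>_. 2)"
    by (rule eq_matI) (auto simp: scalar_mat_def)
  then have block: "psd (2 * 1) (four_block_mat (scalar_mat 2) (scalar_mat 2) (scalar_mat 2)\<^sup>T (scalar_mat 2))"
    using psd_const_mat[of 2 2] by simp
  show ?thesis
    unfolding feasA_vals_def mem_Collect_eq
    by (rule exI[of _ "scalar_mat 2"], rule exI[of _ "scalar_mat 1"], rule exI[of _ "scalar_mat 1"],
        rule exI[of _ "scalar_mat 2"], rule exI[of _ "scalar_mat 2"],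
        use block in \<open>simp add: mat_le_def frob_sq_def mtrace_def sum_entries_def scalar_mat_def\<close>)
qed

lemma example_feasB_lower:
  assumes "t \<in> feasB_vals 1 (scalar_mat 10) 2 1 1 1 1 1"
  shows "64 \<le> t"
proof -
  from assms obtain X Y Z Pc Pr \<Theta> \<alpha> where
      t: "t = frob_sq (scalar_mat 10 - X - Y) + mtrace \<Theta> + sum_entries \<alpha>"
    and dims: "X \<in> carrier_mat 1 1" "Y \<in> carrier_mat 1 1" "Z \<in> carrier_mat 1 1"
      "Pc \<in> carrier_mat 1 1" "Pr \<in> carrier_mat 1 1" "\<Theta> \<in> carrier_mat 1 1" "\<alpha> \<in> carrier_mat 1 1"
    and \<alpha>: "0 \<le> \<alpha> $$ (0, 0)"
    and YZ: "mat_le 1 Y (1 \<cdot>\<^sub>m Z)" "mat_le 1 Z (all_ones 1)"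
    and P: "psd 1 (1\<^sub>m 1 - Pr)" "psd 1 (1\<^sub>m 1 - Pc)"
    and \<Theta>: "psd (2 * 1) (four_block_mat \<Theta> X X\<^sup>T Pc)"
    and block: "psd (2 * 1) (four_block_mat (1 \<cdot>\<^sub>m Pr) X X\<^sup>T (1 \<cdot>\<^sub>m Pc))"
    unfolding feasB_vals_def by auto
  have x: "X $$ (0, 0) \<le> 1"
    by (rule psd_block_diag_le[OF dims(5,4,1) _ P block]) simp_all
  have y: "Y $$ (0, 0) \<le> 1"
    using YZ dims by (auto simp: mat_le_def all_ones_def)
  have \<theta>: "0 \<le> \<Theta> $$ (0, 0)"
    using psd_diag_nonneg[OF \<Theta>, of 0] dims by simp
  have "8\<^sup>2 \<le> (10 - X $$ (0, 0) - Y $$ (0, 0))\<^sup>2"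
    using x y by (intro power_mono) auto
  also have "\<dots> = frob_sq (scalar_mat 10 - X - Y)"
    using dims by (simp add: frob_sq_def scalar_mat_def)
  finally show ?thesis
    using t \<theta> \<alpha> dims by (simp add: mtrace_1x1 sum_entries_1x1)
qed

theorem proposition12:
  shows "\<exists>(n::nat) (D::real mat) (k0::nat) (k1::nat) (lam::real) (mu::real) (beta::real) (gamma::real).
    D \<in> carrier_mat n n \<and> 0 < k0 \<and> 0 < k1 \<and> 0 < lam \<and> 0 < mu \<and> 0 < beta \<and> 0 < gamma \<and>
    optB n D k0 k1 lam mu beta gamma > optA n D k0 k1 lam mu beta gamma"
proof -
  have "optA 1 (scalar_mat 10) 2 1 1 1 1 1 \<le> 54"
    unfolding optA_def by (rule cInf_lower[OF example_feasA_value bdd_below_feasA_vals]) simp_all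
  moreover have "64 \<le> optB 1 (scalar_mat 10) 2 1 1 1 1 1"
    unfolding optB_def by (rule cInf_greatest[OF feasB_vals_nonempty example_feasB_lower])
  ultimately have "scalar_mat 10 \<in> carrier_mat 1 1 \<and> 0 < (2::nat) \<and> 0 < (1::nat) \<and>
      0 < (1::real) \<and> 0 < (1::real) \<and> 0 < (1::real) \<and> 0 < (1::real) \<and>
      optB 1 (scalar_mat 10) 2 1 1 1 1 1 > optA 1 (scalar_mat 10) 2 1 1 1 1 1"
    by (simp add: scalar_mat_def)
  then show ?thesis by blast
qed

end
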